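(* Let $R\ge1$, $\mathbf{x}$ a vector of pairwise distinct reals, $\mathbf{c}=(c_1,\dots,c_R)\in\mathbb{R}^R$, and let $\mathbf{u}\in\mathbb{C}^R$ be an eigenvector of $B(\mathbf{x},\mathbf{c})$. Then $$\Big|\sum_{r=1}^R c_ru_r\Big|^2=\sum_{r=1}^R|c_ru_r|^2.$$
   Context: $B(\mathbf{x},\mathbf{c})$ is the $R\times R$ matrix with entries $b_{m,m}=0$ and $b_{m,n}=\frac{c_mc_n}{x_m-x_n}$ for $m\ne n$. *)

theory Defs
  imports "HOL-Analysis.Analysis"
begin

text \<open>The R x R matrix B(x,c), indexed by a finite type 'n with CARD('n) = R,
  viewed as a complex matrix: zero diagonal, off-diagonal c_m c_n / (x_m - x_n).\<close>
definition Bmat :: "('n::finite \<Rightarrow> real) \<Rightarrow> ('n \<Rightarrow> real) \<Rightarrow> complex ^ 'n ^ 'n" where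
  "Bmat x c = (\<chi> m n. if m = n then 0 else complex_of_real (c m * c n / (x m - x n)))"

definition is_eigenvector :: "complex ^ 'n ^ 'n \<Rightarrow> complex ^ 'n \<Rightarrow> bool" where
  "is_eigenvector A u \<longleftrightarrow> u \<noteq> 0 \<and> (\<exists>l. A *v u = l *s u)"

end

theory Submission
  imports Defs
begin

text \<open>B is real and antisymmetric, hence skew-Hermitian: its eigenvalue l is purely
  imaginary and the eigenvector u is also a left eigenvector, u* B = -cnj(l) u* = l u*.
  So for D = diag(x) the commutator satisfies u* (D B - B D) u = l u* D u - l u* D u = 0.
  But D B - B D has entry (x_m - x_n) b_mn = c_m c_n off the diagonal and 0 on it, and the
  quadratic form of that matrix at u is |sum c_r u_r|^2 - sum |c_r u_r|^2.\<close>

lemma matrix_vector_eigen_component: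
  assumes "A *v u = l *s u"
  shows "(\<Sum>n\<in>UNIV. A $ m $ n * u $ n) = l * u $ m"
proof -
  have "(A *v u) $ m = (l *s u) $ m"
    using assms by simp
  then show ?thesis
    by (simp add: matrix_vector_mult_def)
qed

lemma skew_hermitian_left_eigenvector:
  fixes A :: "complex ^ 'n ^ 'n::finite"
  assumes skew: "\<And>m n. cnj (A $ n $ m) = - A $ m $ n"
    and eig: "A *v u = l *s u"
  shows "(\<Sum>m\<in>UNIV. cnj (u $ m) * A $ m $ n) = - cnj l * cnj (u $ n)"
proof -
  have "cnj (\<Sum>m\<in>UNIV. A $ n $ m * u $ m) = cnj l * cnj (u $ n)"
    by (simp add: matrix_vector_eigen_component[OF eig])
  moreover have "cnj (\<Sum>m\<in>UNIV. A $ n $ m * u $ m) = - (\<Sum>m\<in>UNIV. cnj (u $ m) * A $ m $ n)"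
    by (simp add: skew sum_negf mult.commute)
  ultimately show ?thesis
    by (simp add: minus_equation_iff)
qed

lemma skew_hermitian_eigenvalue_imaginary:
  fixes A :: "complex ^ 'n ^ 'n::finite"
  assumes skew: "\<And>m n. cnj (A $ n $ m) = - A $ m $ n"
    and eig: "A *v u = l *s u" and "u \<noteq> 0"
  shows "cnj l = - l"
proof -
  define N where "N = (\<Sum>m\<in>UNIV. cnj (u $ m) * u $ m)"
  have "l * N = (\<Sum>m\<in>UNIV. cnj (u $ m) * (\<Sum>n\<in>UNIV. A $ m $ n * u $ n))"
    by (simp only: matrix_vector_eigen_component[OF eig]) (simp add: N_def sum_distrib_left mult_ac)
  also have "\<dots> = (\<Sum>m\<in>UNIV. \<Sum>n\<in>UNIV. cnj (u $ m) * A $ m $ n * u $ n)"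
    by (simp add: sum_distrib_left mult.assoc)
  also have "\<dots> = (\<Sum>n\<in>UNIV. (\<Sum>m\<in>UNIV. cnj (u $ m) * A $ m $ n) * u $ n)"
    by (subst sum.swap) (simp add: sum_distrib_right)
  also have "\<dots> = - cnj l * N"
    by (simp add: N_def skew_hermitian_left_eigenvector[OF skew eig] sum_distrib_left mult_ac)
  finally have "(l + cnj l) * N = 0"
    by (simp add: algebra_simps)
  moreover have "N \<noteq> 0"
  proof
    assume "N = 0"
    moreover have "N = of_real (\<Sum>m\<in>UNIV. (cmod (u $ m))\<^sup>2)"
      unfolding N_def of_real_sum by (simp only: complex_norm_square mult.commute)
    ultimately have "(\<Sum>m\<in>UNIV. (cmod (u $ m))\<^sup>2) = 0"
      by (metis of_real_eq_0_iff)
    then have "u = 0"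
      by (simp add: sum_nonneg_eq_0_iff vec_eq_iff)
    with \<open>u \<noteq> 0\<close> show False ..
  qed
  ultimately show ?thesis
    by (simp add: add_eq_0_iff)
qed

lemma skew_hermitian_commutator_form_eq_zero:
  fixes A :: "complex ^ 'n ^ 'n::finite" and x :: "'n \<Rightarrow> real"
  assumes skew: "\<And>m n. cnj (A $ n $ m) = - A $ m $ n"
    and eig: "A *v u = l *s u" and "u \<noteq> 0"
  shows "(\<Sum>m\<in>UNIV. \<Sum>n\<in>UNIV. cnj (u $ m) * (of_real (x m - x n) * A $ m $ n) * u $ n) = 0"
proof -
  define X where "X = (\<Sum>m\<in>UNIV. of_real (x m) * cnj (u $ m) * u $ m)"
  have "(\<Sum>m\<in>UNIV. \<Sum>n\<in>UNIV. cnj (u $ m) * (of_real (x m - x n) * A $ m $ n) * u $ n)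
      = (\<Sum>m\<in>UNIV. of_real (x m) * cnj (u $ m) * (\<Sum>n\<in>UNIV. A $ m $ n * u $ n))
        - (\<Sum>m\<in>UNIV. \<Sum>n\<in>UNIV. cnj (u $ m) * A $ m $ n * (of_real (x n) * u $ n))"
    by (simp add: sum_subtractf sum_distrib_left algebra_simps)
  also have "(\<Sum>m\<in>UNIV. \<Sum>n\<in>UNIV. cnj (u $ m) * A $ m $ n * (of_real (x n) * u $ n))
      = (\<Sum>n\<in>UNIV. (\<Sum>m\<in>UNIV. cnj (u $ m) * A $ m $ n) * (of_real (x n) * u $ n))"
    by (subst sum.swap) (simp add: sum_distrib_right)
  also have "(\<Sum>m\<in>UNIV. of_real (x m) * cnj (u $ m) * (\<Sum>n\<in>UNIV. A $ m $ n * u $ n)) = l * X"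
    by (simp only: matrix_vector_eigen_component[OF eig]) (simp add: X_def sum_distrib_left mult_ac)
  also have "(\<Sum>n\<in>UNIV. (\<Sum>m\<in>UNIV. cnj (u $ m) * A $ m $ n) * (of_real (x n) * u $ n))
      = - cnj l * X"
    by (simp add: X_def skew_hermitian_left_eigenvector[OF skew eig] sum_distrib_left mult_ac)
  finally show ?thesis
    using skew_hermitian_eigenvalue_imaginary[OF skew eig \<open>u \<noteq> 0\<close>] by simp
qed

lemma sum_offdiagonal_products:
  fixes w :: "'n::finite \<Rightarrow> complex"
  shows "(\<Sum>m\<in>UNIV. \<Sum>n\<in>UNIV. if m = n then 0 else cnj (w m) * w n)
    = of_real ((cmod (\<Sum>r\<in>UNIV. w r))\<^sup>2 - (\<Sum>r\<in>UNIV. (cmod (w r))\<^sup>2))"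
proof -
  have "(\<Sum>m\<in>UNIV. \<Sum>n\<in>UNIV. if m = n then 0 else cnj (w m) * w n)
      = (\<Sum>m\<in>UNIV. \<Sum>n\<in>UNIV. cnj (w m) * w n) - (\<Sum>m\<in>UNIV. cnj (w m) * w m)"
    by (simp add: sum.If_cases Diff_eq[symmetric] sum_diff1 sum_subtractf)
  also have "(\<Sum>m\<in>UNIV. \<Sum>n\<in>UNIV. cnj (w m) * w n) = cnj (\<Sum>r\<in>UNIV. w r) * (\<Sum>r\<in>UNIV. w r)"
    by (simp add: sum_distrib_left sum_distrib_right) (rule sum.swap)
  finally show ?thesis
    unfolding of_real_diff of_real_sum complex_norm_square by (simp add: mult.commute)
qed

lemma Bmat_skew_hermitian: "cnj (Bmat x c $ n $ m) = - Bmat x c $ m $ n"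
proof -
  have "c n * c m / (x n - x m) = - (c m * c n / (x m - x n))"
    by (metis minus_diff_eq divide_minus_right mult.commute)
  then show ?thesis
    by (auto simp: Bmat_def)
qed

lemma Bmat_commutator:
  assumes "inj x"
  shows "of_real (x m - x n) * Bmat x c $ m $ n = (if m = n then 0 else of_real (c m * c n))"
proof (cases "m = n")
  case False
  then have "x m - x n \<noteq> 0"
    using assms by (auto dest: injD)
  with False show ?thesis
    by (simp add: Bmat_def flip: of_real_mult)
qed (simp add: Bmat_def)

theorem lemma7:
  fixes x :: "'n::finite \<Rightarrow> real" and c :: "'n \<Rightarrow> real" and u :: "complex ^ 'n"
  assumes "inj x"
    and "is_eigenvector (Bmat x c) u"
  shows "(cmod (\<Sum>r\<in>UNIV. complex_of_real (c r) * u $ r))\<^sup>2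
         = (\<Sum>r\<in>UNIV. (cmod (complex_of_real (c r) * u $ r))\<^sup>2)"
proof -
  define w where "w r = complex_of_real (c r) * u $ r" for r
  obtain l where eig: "Bmat x c *v u = l *s u" and "u \<noteq> 0"
    using assms(2) unfolding is_eigenvector_def by blast
  have "0 = (\<Sum>m\<in>UNIV. \<Sum>n\<in>UNIV. cnj (u $ m) * (of_real (x m - x n) * Bmat x c $ m $ n) * u $ n)"
    using skew_hermitian_commutator_form_eq_zero[OF Bmat_skew_hermitian eig \<open>u \<noteq> 0\<close>] by simp
  also have "\<dots> = (\<Sum>m\<in>UNIV. \<Sum>n\<in>UNIV. if m = n then 0 else cnj (w m) * w n)"
    unfolding Bmat_commutator[OF assms(1)] w_def by (intro sum.cong refl) (simp add: mult_ac)
  also have "\<dots> = of_real ((cmod (\<Sum>r\<in>UNIV. w r))\<^sup>2 - (\<Sum>r\<in>UNIV. (cmod (w r))\<^sup>2))"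
    by (rule sum_offdiagonal_products)
  finally have "(cmod (\<Sum>r\<in>UNIV. w r))\<^sup>2 - (\<Sum>r\<in>UNIV. (cmod (w r))\<^sup>2) = 0"
    unfolding eq_commute[of 0] of_real_eq_0_iff .
  then show ?thesis
    unfolding w_def by simp
qed

end
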